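(* Let $\Gamma=(\Gamma^\alpha)_{\alpha\in\{0,1\}^k}$ be a vector of complex numbers indexed by $\{0,1\}^k$ such that for all $\alpha,\beta\in\{0,1\}^k$, writing $p_1<\cdots<p_l$ for the positions where $\alpha$ and $\beta$ differ, \[ \sum_{i=1}^{l}(-1)^{i}\,\Gamma^{\alpha\oplus e_{p_i}}\,\Gamma^{\beta\oplus e_{p_i}}=0 . \] Then $\Gamma$ satisfies the Parity Condition: either $\Gamma^\alpha=0$ for all $\alpha$ of odd Hamming weight, or $\Gamma^\alpha=0$ for all $\alpha$ of even Hamming weight.
   Context: $\oplus$ denotes bitwise XOR and $e_j\in\{0,1\}^k$ is the string with a $1$ in position $j$ and $0$ elsewhere. *)

theory Defs
  imports Complex_Main
begin

text \<open>Binary strings in {0,1}^k are modelled as boolean lists of length k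
  (True = 1). Positions are 0-based indices 0..k-1.\<close>

definition bitstrings :: "nat \<Rightarrow> bool list set" where
  "bitstrings k = {xs. length xs = k}"

definition flip :: "bool list \<Rightarrow> nat \<Rightarrow> bool list" where
  "flip xs j = xs[j := \<not> xs ! j]"

definition hweight :: "bool list \<Rightarrow> nat" where
  "hweight xs = length (filter id xs)"

definition diffpos :: "bool list \<Rightarrow> bool list \<Rightarrow> nat list" where
  "diffpos a b = filter (\<lambda>j. a ! j \<noteq> b ! j) [0..<length a]"

definition parity_condition :: "nat \<Rightarrow> (bool list \<Rightarrow> complex) \<Rightarrow> bool" where
  "parity_condition k G \<longleftrightarrow>
     (\<forall>a\<in>bitstrings k. odd (hweight a) \<longrightarrow> G a = 0) \<or>
     (\<forall>a\<in>bitstrings k. even (hweight a) \<longrightarrow> G a = 0)"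

end

theory Submission
  imports Defs
begin

text \<open>If \<open>G x * G y \<noteq> 0\<close> for some \<open>x, y\<close> at odd Hamming distance, take such a pair at
  minimal distance and apply the relation to \<open>x \<oplus> e\<^sub>p, y \<oplus> e\<^sub>p\<close>, where \<open>p\<close> is the first
  position where \<open>x\<close> and \<open>y\<close> differ. These differ in the same positions, so the term
  \<open>i = 1\<close> is \<open>-G x * G y\<close>, while every other term contains a factor \<open>G (x \<oplus> e\<^sub>p \<oplus> e\<^sub>q)\<close>
  with \<open>x \<oplus> e\<^sub>p \<oplus> e\<^sub>q\<close> at odd distance \<open>d - 2\<close> from \<open>y\<close>, which vanishes by minimality
  because \<open>G y \<noteq> 0\<close>. Finally the distance of \<open>a\<close> and \<open>b\<close> is odd iff their Hamming weights
  have different parities.\<close>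

definition flip_relation_sum :: "(bool list \<Rightarrow> complex) \<Rightarrow> bool list \<Rightarrow> bool list \<Rightarrow> complex" where
  "flip_relation_sum G a b =
     (\<Sum>i=1..length (diffpos a b).
        (-1) ^ i * G (flip a (diffpos a b ! (i - 1))) * G (flip b (diffpos a b ! (i - 1))))"

lemma set_diffpos: "set (diffpos a b) = {j. j < length a \<and> a ! j \<noteq> b ! j}"
  unfolding diffpos_def by auto

lemma length_diffpos: "length (diffpos a b) = card {j. j < length a \<and> a ! j \<noteq> b ! j}"
  unfolding diffpos_def by (simp add: length_filter_conv_card cong: conj_cong)

lemma distinct_diffpos: "distinct (diffpos a b)"
  unfolding diffpos_def by simp

lemma length_flip [simp]: "length (flip x p) = length x"
  unfolding flip_def by simp

lemma nth_flip: "flip x p ! j = (if j = p \<and> p < length x then \<not> x ! j else x ! j)"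
  unfolding flip_def by (auto simp: nth_list_update list_update_beyond)

lemma flip_flip [simp]: "flip (flip x p) p = x"
  unfolding flip_def by (cases "p < length x") (auto simp: list_update_beyond)

lemma flip_in_bitstrings [simp]: "flip x p \<in> bitstrings k \<longleftrightarrow> x \<in> bitstrings k"
  unfolding bitstrings_def by simp

lemma diffpos_flip_flip:
  assumes "length y = length x"
  shows "diffpos (flip x p) (flip y p) = diffpos x y"
  unfolding diffpos_def using assms by (auto simp: nth_flip intro!: filter_cong)

lemma length_diffpos_flip2:
  assumes "length y = length x" "p \<in> set (diffpos x y)" "q \<in> set (diffpos x y)" "p \<noteq> q"
  shows "length (diffpos (flip (flip x p) q) y) = length (diffpos x y) - 2"
proof -
  let ?D = "{j. j < length x \<and> x ! j \<noteq> y ! j}"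
  have "{j. j < length x \<and> flip (flip x p) q ! j \<noteq> y ! j} = ?D - {p, q}"
    using assms by (auto simp: nth_flip set_diffpos)
  moreover have "card (?D - {p, q}) = card ?D - 2"
    using assms by (subst card_Diff_subset) (auto simp: set_diffpos)
  ultimately show ?thesis by (simp add: length_diffpos)
qed

lemma odd_length_diffpos_iff:
  assumes "length b = length a"
  shows "odd (length (diffpos a b)) \<longleftrightarrow> odd (hweight a + hweight b)"
proof -
  let ?A = "{j. j < length a \<and> a ! j}" and ?B = "{j. j < length a \<and> b ! j}"
  have weights: "hweight a = card ?A" "hweight b = card ?B"
    unfolding hweight_def using assms by (simp_all add: length_filter_conv_card)
  have "{j. j < length a \<and> a ! j \<noteq> b ! j} = (?A \<union> ?B) - (?A \<inter> ?B)" by auto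
  moreover have "card ((?A \<union> ?B) - (?A \<inter> ?B)) = card (?A \<union> ?B) - card (?A \<inter> ?B)"
    by (subst card_Diff_subset) auto
  moreover have "card ?A + card ?B = card (?A \<union> ?B) + card (?A \<inter> ?B)"
    by (rule card_Un_Int) auto
  moreover have "card (?A \<inter> ?B) \<le> card (?A \<union> ?B)" by (intro card_mono) auto
  ultimately show ?thesis by (auto simp: length_diffpos weights)
qed

lemma flip_relation_sum_first_term:
  assumes "length y = length x" and ds: "diffpos x y = p # qs"
    and vanish: "\<forall>q\<in>set qs. G (flip (flip x p) q) = 0"
  shows "flip_relation_sum G (flip x p) (flip y p) = - G x * G y"
proof -
  define f where "f i = (-1) ^ i * G (flip (flip x p) ((p # qs) ! (i - 1)))
      * G (flip (flip y p) ((p # qs) ! (i - 1)))" for i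
  have "f i = 0" if "i \<in> {2..Suc (length qs)}" for i
  proof -
    from that have "(p # qs) ! (i - 1) \<in> set qs"
      by (cases i) (auto simp: nth_Cons split: nat.split)
    with vanish show ?thesis unfolding f_def by simp
  qed
  then have "(\<Sum>i=1..Suc (length qs). f i) = f 1"
    by (subst sum.atLeast_Suc_atMost) (auto simp: numeral_2_eq_2)
  then show ?thesis
    using assms by (simp add: flip_relation_sum_def diffpos_flip_flip f_def)
qed

lemma odd_distance_product_eq_0:
  assumes rel: "\<forall>a\<in>bitstrings k. \<forall>b\<in>bitstrings k. flip_relation_sum G a b = 0"
    and "x \<in> bitstrings k" "y \<in> bitstrings k" "odd (length (diffpos x y))"
  shows "G x * G y = 0"
  using assms(2-)
proof (induction "length (diffpos x y)" arbitrary: x rule: less_induct)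
  case less
  show ?case
  proof (rule ccontr)
    assume nonzero: "G x * G y \<noteq> 0"
    have lengths: "length y = length x"
      using less.prems by (simp add: bitstrings_def)
    obtain p qs where ds: "diffpos x y = p # qs"
      using less.prems(3) by (cases "diffpos x y") auto
    have "G (flip (flip x p) q) = 0" if q: "q \<in> set qs" for q
    proof -
      have "p \<noteq> q" using q distinct_diffpos[of x y] ds by auto
      then have "length (diffpos (flip (flip x p) q) y) = length (diffpos x y) - 2"
        using q ds lengths by (intro length_diffpos_flip2) auto
      moreover have "length (diffpos x y) \<ge> 3"
        using q ds less.prems(3) by (cases qs; cases "tl qs") auto
      ultimately have "G (flip (flip x p) q) * G y = 0"
        using less by (intro less.hyps) auto
      with nonzero show ?thesis by simp
    qed
    then have "flip_relation_sum G (flip x p) (flip y p) = - G x * G y"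
      using lengths ds by (intro flip_relation_sum_first_term) auto
    moreover have "flip_relation_sum G (flip x p) (flip y p) = 0"
      using rel less.prems by simp
    ultimately show False using nonzero by simp
  qed
qed

theorem theorem2:
  fixes k :: nat and G :: "bool list \<Rightarrow> complex"
  assumes "\<forall>a\<in>bitstrings k. \<forall>b\<in>bitstrings k.
    (\<Sum>i=1..length (diffpos a b).
       (-1) ^ i * G (flip a (diffpos a b ! (i - 1))) * G (flip b (diffpos a b ! (i - 1)))) = 0"
  shows "parity_condition k G"
proof (rule ccontr)
  assume "\<not> parity_condition k G"
  then obtain a b where a: "a \<in> bitstrings k" "odd (hweight a)" "G a \<noteq> 0"
    and b: "b \<in> bitstrings k" "even (hweight b)" "G b \<noteq> 0"
    unfolding parity_condition_def by auto
  have "odd (length (diffpos a b))"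
    using a b odd_length_diffpos_iff[of b a] by (simp add: bitstrings_def)
  then have "G a * G b = 0"
    using odd_distance_product_eq_0 assms a b unfolding flip_relation_sum_def by blast
  with a b show False by simp
qed

end
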